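(* Let $n>k\ge1$ be coprime integers, $\eta$ in the upper half-plane, $\Lambda=\mathbb{Z}+\mathbb{Z}\eta$. For all $\tau\in\mathbb{C}\setminus\frac1n\Lambda$ and $z\in\mathbb{C}$, $$R_{n,k,\tau}(z)^{\bullet}=e(-n^2z)\,R_{n,n-k,-\tau}(-z),$$ where for $A\in\mathrm{End}(V\otimes V)$, $A^\bullet$ is the adjoint of $A$ with respect to the symmetric bilinear form on $V\otimes V$ with $\langle x_i\otimes x_k,x_j\otimes x_\ell\rangle=\delta_{ij}\delta_{k\ell}$, i.e. $\langle A^\bullet x,y\rangle=\langle x,Ay\rangle$ for all $x,y$.
   Context: Write $e(z)=e^{2\pi i z}$ and $\theta(z)=\sum_{m\in\mathbb{Z}}(-1)^m e\big(mz+\tfrac12 m(m-1)\eta\big)$. For $\alpha\in\mathbb{Z}$ put $\theta_\alpha(z)=e\big(\alpha z+\tfrac{\alpha}{2n}+\tfrac{\alpha(\alpha-n)}{2n}\eta\big)\prod_{m=0}^{n-1}\theta\big(z+\tfrac mn+\tfrac{\alpha}{n}\eta\big)$, regarded as indexed by $\alpha\in\mathbb{Z}_n$. Let $V$ be an $n$-dimensional complex vector space with basis $x_i$, $i\in\mathbb{Z}_n$. For an integer $1\le k'<n$ coprime to $n$, $\tau\in\mathbb{C}\setminus\frac1n\Lambda$ and $z\in\mathbb{C}$, define $R_{n,k',\tau}(z)\in\mathrm{End}(V\otimes V)$ by $$R_{n,k',\tau}(z)(x_i\otimes x_j)=\frac{\theta_0(-z)\cdots\theta_{n-1}(-z)}{\theta_1(0)\cdots\theta_{n-1}(0)}\sum_{r\in\mathbb{Z}_n}\frac{\theta_{j-i+r(k'-1)}(-z+\tau)}{\theta_{j-i-r}(-z)\,\theta_{k'r}(\tau)}\,x_{j-r}\otimes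 x_{i+r}.$$ *)

theory Defs
  imports "HOL-Analysis.Analysis"
begin

definition ee :: "complex \<Rightarrow> complex" where
  "ee z = exp (2 * of_real pi * \<i> * z)"

definition theta :: "complex \<Rightarrow> complex \<Rightarrow> complex" where
  "theta \<eta> z = (\<Sum>\<^sub>\<infinity>m::int. (-1) powi m * ee (of_int m * z + of_int (m * (m - 1)) / 2 * \<eta>))"

definition theta_raw :: "nat \<Rightarrow> complex \<Rightarrow> int \<Rightarrow> complex \<Rightarrow> complex" where
  "theta_raw n \<eta> \<alpha> z =
     ee (of_int \<alpha> * z + of_int \<alpha> / (2 * of_nat n) + of_int (\<alpha> * (\<alpha> - int n)) / (2 * of_nat n) * \<eta>)
     * (\<Prod>m<n. theta \<eta> (z + of_nat m / of_nat n + of_int \<alpha> / of_nat n * \<eta>))"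

definition theta_idx :: "nat \<Rightarrow> complex \<Rightarrow> int \<Rightarrow> complex \<Rightarrow> complex" where
  "theta_idx n \<eta> \<alpha> z = theta_raw n \<eta> (\<alpha> mod int n) z"

text \<open>Elements of V (x) V: coefficient functions on Z_n x Z_n, represented by
  pairs of integer representatives in {0..<n}.\<close>
type_synonym vec2 = "int \<times> int \<Rightarrow> complex"

definition idx2 :: "nat \<Rightarrow> (int \<times> int) set" where
  "idx2 n = {0..<int n} \<times> {0..<int n}"

definition basis2 :: "nat \<Rightarrow> int \<Rightarrow> int \<Rightarrow> vec2" where
  "basis2 n i j = (\<lambda>p. if p = (i mod int n, j mod int n) then 1 else 0)"

definition bform :: "nat \<Rightarrow> vec2 \<Rightarrow> vec2 \<Rightarrow> complex" where
  "bform n x y = (\<Sum>p\<in>idx2 n. x p * y p)"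

definition lin_ext :: "nat \<Rightarrow> (int \<Rightarrow> int \<Rightarrow> vec2) \<Rightarrow> vec2 \<Rightarrow> vec2" where
  "lin_ext n f v = (\<lambda>q. \<Sum>p\<in>idx2 n. v p * f (fst p) (snd p) q)"

text \<open>B is the adjoint A^bullet of A: <B x, y> = <x, A y> for all x, y
  (unique, since the form is nondegenerate)\<close>
definition is_adjoint :: "nat \<Rightarrow> (vec2 \<Rightarrow> vec2) \<Rightarrow> (vec2 \<Rightarrow> vec2) \<Rightarrow> bool" where
  "is_adjoint n B A \<longleftrightarrow> (\<forall>x y. bform n (B x) y = bform n x (A y))"

text \<open>The factor
  theta_0(-z)...theta_{n-1}(-z) / theta_{j-i-r}(-z) is written with the
  cancellation performed (removable singularity), i.e. as the product of
  theta_m(-z) over m in Z_n with m different from j-i-r.\<close>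
definition R_basis :: "nat \<Rightarrow> complex \<Rightarrow> nat \<Rightarrow> complex \<Rightarrow> complex \<Rightarrow> int \<Rightarrow> int \<Rightarrow> vec2" where
  "R_basis n \<eta> k' \<tau> z i j =
     (\<lambda>q. (\<Sum>r\<in>{0..<int n}.
        ((\<Prod>m\<in>{0..<int n} - {(j - i - r) mod int n}. theta_idx n \<eta> m (-z))
          / (\<Prod>m\<in>{1..<int n}. theta_idx n \<eta> m 0))
        * theta_idx n \<eta> (j - i + r * (int k' - 1)) (-z + \<tau>)
        / theta_idx n \<eta> (int k' * r) \<tau>
        * basis2 n (j - r) (i + r) q))"

definition R_op :: "nat \<Rightarrow> complex \<Rightarrow> nat \<Rightarrow> complex \<Rightarrow> complex \<Rightarrow> vec2 \<Rightarrow> vec2" where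
  "R_op n \<eta> k' \<tau> z = lin_ext n (R_basis n \<eta> k' \<tau> z)"

end

theory Submission
  imports Defs
begin

(* Reindexing the theta series by m - 1 and by 1 - m gives
   theta(z + eta) = theta(-z) = -e(-z) theta(z), and theta(z + 1) = theta(z).
   Hence the product of the theta(z + m/n) is quasi-periodic, theta_alpha depends only on
   alpha mod n, and theta_alpha(w) = -e(alpha/n + n w) theta_{-alpha}(-w).
   Applying this reflection to every theta factor of the coefficient of x_{j-r} (x) x_{i+r}
   in R_{n,k,tau}(z)(x_i (x) x_j) yields the coefficient of x_i (x) x_j in
   R_{n,n-k,-tau}(-z)(x_{j-r} (x) x_{i+r}); the exponential factors collect into e(-n^2 z). *)

lemma ee_add: "ee (a + b) = ee a * ee b"
  unfolding ee_def by (simp add: distrib_left exp_add)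

lemma ee_zero [simp]: "ee 0 = 1"
  unfolding ee_def by simp

lemma ee_nonzero [simp]: "ee a \<noteq> 0"
  unfolding ee_def by simp

lemma ee_minus: "ee (- a) = inverse (ee a)"
  unfolding ee_def by (simp add: exp_minus)

lemma ee_of_int [simp]: "ee (of_int m) = 1"
proof -
  have "2 * of_real pi * \<i> * of_int m = \<i> * (of_int m * (of_real pi * 2))"
    by (simp add: algebra_simps)
  then have "ee (of_int m) = exp (\<i> * (of_int m * (of_real pi * 2)))"
    unfolding ee_def by (simp only:)
  then show ?thesis
    by simp
qed

lemma ee_add_of_int: "ee (a + of_int m) = ee a"
  by (simp add: ee_add)

lemma ee_half: "ee (1 / 2) = -1"
  unfolding ee_def by simp

lemma ee_of_nat_mult: "ee (of_nat n * a) = ee a ^ n"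
  unfolding ee_def by (metis exp_of_nat_mult mult.left_commute)

lemma ee_sum: "ee (sum f A) = (\<Prod>x\<in>A. ee (f x))"
  by (induction A rule: infinite_finite_induct) (auto simp: ee_add)

lemma ee_mod_frac:
  assumes "n > 0"
  shows "ee (of_int (\<beta> mod int n) / of_nat n) = ee (of_int \<beta> / of_nat n)"
proof -
  have "of_int (\<beta> mod int n) / of_nat n = of_int \<beta> / of_nat n + (of_int (- (\<beta> div int n)) :: complex)"
    using assms by (simp add: minus_div_mult_eq_mod[symmetric] field_simps)
  then show ?thesis
    by (simp only: ee_add_of_int)
qed

lemma prod_minus_ee_frac:
  assumes "n > 0"
  shows "(\<Prod>m<n. - ee (a + of_nat m / of_nat n)) = - ee (of_nat n * a)"
proof -
  have "2 * (\<Sum>m<n. of_nat m) = (of_nat n * (of_nat n - 1) :: complex)"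
    by (induction n) (auto simp: algebra_simps)
  then have sum: "(\<Sum>m<n. a + of_nat m / of_nat n) = of_nat n * a + of_nat (n - 1) * (1 / 2)"
    using assms by (simp add: sum.distrib sum_divide_distrib[symmetric] field_simps)
  have "(\<Prod>m<n. ee (a + of_nat m / of_nat n)) = ee (\<Sum>m<n. a + of_nat m / of_nat n)"
    by (rule ee_sum[symmetric])
  also have "\<dots> = ee (of_nat n * a) * (-1) ^ (n - 1)"
    unfolding sum by (simp only: ee_add ee_of_nat_mult[of "n - 1" "1 / 2"] ee_half)
  finally have "(\<Prod>m<n. - ee (a + of_nat m / of_nat n)) = (-1) ^ n * (-1) ^ (n - 1) * ee (of_nat n * a)"
    by (simp add: prod_uminus)
  also have "(-1) ^ n * (-1) ^ (n - 1) = (-1 :: complex)"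
    using assms by (cases n) auto
  finally show ?thesis
    by simp
qed

lemma prod_minus_ee_minus_frac:
  assumes "n > 0"
  shows "(\<Prod>m<n. - ee (- (a + of_nat m / of_nat n))) = - ee (- (of_nat n * a))"
proof -
  have "(\<Prod>m<n. - ee (- (a + of_nat m / of_nat n))) = (\<Prod>m<n. inverse (- ee (a + of_nat m / of_nat n)))"
    by (simp only: ee_minus inverse_minus_eq)
  also have "\<dots> = inverse (\<Prod>m<n. - ee (a + of_nat m / of_nat n))"
    by (simp only: prod_inversef[symmetric] o_def)
  finally show ?thesis
    by (simp only: prod_minus_ee_frac[OF assms] inverse_minus_eq ee_minus)
qed

definition theta_term :: "complex \<Rightarrow> complex \<Rightarrow> int \<Rightarrow> complex" where
  "theta_term \<eta> z m = (-1) powi m * ee (of_int m * z + of_int (m * (m - 1)) / 2 * \<eta>)"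

(* No summability hypothesis: infsum_reindex_bij_betw and infsum_cmult_right' hold unconditionally. *)
lemma theta_eq_scaled_by_reindex:
  assumes "bij g" and "\<And>m. theta_term \<eta> w (g m) = c * theta_term \<eta> z m"
  shows "theta \<eta> w = c * theta \<eta> z"
proof -
  have "theta \<eta> w = (\<Sum>\<^sub>\<infinity>m. theta_term \<eta> w (g m))"
    unfolding theta_def theta_term_def by (rule infsum_reindex_bij_betw[OF assms(1), symmetric])
  also have "\<dots> = (\<Sum>\<^sub>\<infinity>m. c * theta_term \<eta> z m)"
    by (simp add: assms(2))
  also have "\<dots> = c * theta \<eta> z"
    unfolding theta_def theta_term_def by (rule infsum_cmult_right')
  finally show ?thesis .
qed

lemma minus_one_powi_diff_one: "(-1 :: complex) powi (m - 1) = - ((-1) powi m)"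
  by (simp add: power_int_diff)

lemma theta_plus_one: "theta \<eta> (z + 1) = theta \<eta> z"
proof -
  have "theta_term \<eta> (z + 1) m = theta_term \<eta> z m" for m
  proof -
    have "of_int m * (z + 1) + of_int (m * (m - 1)) / 2 * \<eta>
        = (of_int m * z + of_int (m * (m - 1)) / 2 * \<eta>) + of_int m"
      by (simp add: algebra_simps)
    then show ?thesis
      unfolding theta_term_def by (simp only: ee_add_of_int)
  qed
  then show ?thesis
    using theta_eq_scaled_by_reindex[of id \<eta> "z + 1" 1 z] by simp
qed

lemma theta_plus_eta: "theta \<eta> (z + \<eta>) = - ee (- z) * theta \<eta> z"
proof (rule theta_eq_scaled_by_reindex)
  show "bij (\<lambda>m :: int. m - 1)"
    by (rule bij_betwI[where g = "\<lambda>m. m + 1"]) auto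
  fix m :: int
  have "ee (of_int (m - 1) * (z + \<eta>) + of_int ((m - 1) * (m - 1 - 1)) / 2 * \<eta>)
      = ee (- z) * ee (of_int m * z + of_int (m * (m - 1)) / 2 * \<eta>)"
    unfolding ee_add[symmetric] by (rule arg_cong[where f = ee]) (simp add: field_simps)
  then show "theta_term \<eta> (z + \<eta>) (m - 1) = - ee (- z) * theta_term \<eta> z m"
    unfolding theta_term_def minus_one_powi_diff_one by simp
qed

lemma theta_minus: "theta \<eta> (- z) = - ee (- z) * theta \<eta> z"
proof (rule theta_eq_scaled_by_reindex)
  show "bij (\<lambda>m :: int. 1 - m)"
    by (rule bij_betwI[where g = "\<lambda>m. 1 - m"]) auto
  fix m :: int
  have "ee (of_int (1 - m) * (- z) + of_int ((1 - m) * (1 - m - 1)) / 2 * \<eta>)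
      = ee (- z) * ee (of_int m * z + of_int (m * (m - 1)) / 2 * \<eta>)"
    unfolding ee_add[symmetric] by (rule arg_cong[where f = ee]) (simp add: field_simps)
  then show "theta_term \<eta> (- z) (1 - m) = - ee (- z) * theta_term \<eta> z m"
    unfolding theta_term_def power_int_minus_one_diff_commute[of 1 m] minus_one_powi_diff_one
    by simp
qed

definition theta_prod :: "nat \<Rightarrow> complex \<Rightarrow> complex \<Rightarrow> complex" where
  "theta_prod n \<eta> x = (\<Prod>m<n. theta \<eta> (x + of_nat m / of_nat n))"

lemma theta_prod_reflect:
  assumes "n > 0"
  shows "theta_prod n \<eta> x = (\<Prod>m<n. theta \<eta> (x - of_nat m / of_nat n))"
  unfolding theta_prod_def
proof (rule prod.reindex_bij_witness[where i = "\<lambda>m. (n - m) mod n" and j = "\<lambda>m. (n - m) mod n"])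
  fix m assume m: "m \<in> {..<n}"
  show "(n - (n - m) mod n) mod n = m" and "(n - m) mod n \<in> {..<n}"
    using m assms by (cases "m = 0"; simp)+
  show "theta \<eta> (x - of_nat ((n - m) mod n) / of_nat n) = theta \<eta> (x + of_nat m / of_nat n)"
  proof (cases "m = 0")
    case True
    then show ?thesis
      by simp
  next
    case False
    with m assms have "x + of_nat m / of_nat n = (x - of_nat ((n - m) mod n) / of_nat n) + 1"
      by (simp add: field_simps)
    then show ?thesis
      by (simp only: theta_plus_one)
  qed
next
  fix m assume m: "m \<in> {..<n}"
  show "(n - (n - m) mod n) mod n = m" and "(n - m) mod n \<in> {..<n}"
    using m assms by (cases "m = 0"; simp)+
qed

lemma theta_prod_plus_eta:
  assumes "n > 0"
  shows "theta_prod n \<eta> (x + \<eta>) = - ee (- (of_nat n * x)) * theta_prod n \<eta> x"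
proof -
  have "theta_prod n \<eta> (x + \<eta>)
      = (\<Prod>m<n. - ee (- (x + of_nat m / of_nat n)) * theta \<eta> (x + of_nat m / of_nat n))"
    unfolding theta_prod_def theta_plus_eta[symmetric] by (simp add: add_ac)
  then show ?thesis
    by (simp only: prod.distrib prod_minus_ee_minus_frac[OF assms] theta_prod_def)
qed

lemma theta_prod_minus:
  assumes "n > 0"
  shows "theta_prod n \<eta> (- x) = - ee (- (of_nat n * x)) * theta_prod n \<eta> x"
proof -
  have "theta_prod n \<eta> (- x)
      = (\<Prod>m<n. - ee (- (x + of_nat m / of_nat n)) * theta \<eta> (x + of_nat m / of_nat n))"
    unfolding theta_prod_reflect[OF assms] theta_minus[symmetric] by (simp add: algebra_simps)
  then show ?thesis
    by (simp only: prod.distrib prod_minus_ee_minus_frac[OF assms] theta_prod_def)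
qed

definition theta_raw_phase :: "nat \<Rightarrow> complex \<Rightarrow> int \<Rightarrow> complex \<Rightarrow> complex" where
  "theta_raw_phase n \<eta> \<alpha> z =
     of_int \<alpha> * z + of_int \<alpha> / (2 * of_nat n) + of_int (\<alpha> * (\<alpha> - int n)) / (2 * of_nat n) * \<eta>"

lemma theta_raw_eq:
  "theta_raw n \<eta> \<alpha> z
     = ee (theta_raw_phase n \<eta> \<alpha> z) * theta_prod n \<eta> (z + of_int \<alpha> / of_nat n * \<eta>)"
  unfolding theta_raw_def theta_prod_def theta_raw_phase_def by (simp add: add_ac)

lemma theta_raw_add_n:
  assumes "n > 0"
  shows "theta_raw n \<eta> (\<alpha> + int n) w = theta_raw n \<eta> \<alpha> w"
proof -
  let ?x = "w + of_int \<alpha> / of_nat n * \<eta>"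
  have shift: "w + of_int (\<alpha> + int n) / of_nat n * \<eta> = ?x + \<eta>"
    using assms by (simp add: field_simps)
  have "ee (theta_raw_phase n \<eta> (\<alpha> + int n) w) * ee (- (of_nat n * ?x))
      = ee (theta_raw_phase n \<eta> (\<alpha> + int n) w + - (of_nat n * ?x))"
    by (rule ee_add[symmetric])
  also have "\<dots> = ee (theta_raw_phase n \<eta> \<alpha> w + 1 / 2)"
    using assms by (auto intro!: arg_cong[where f = ee] simp: theta_raw_phase_def field_simps)
  also have "\<dots> = - ee (theta_raw_phase n \<eta> \<alpha> w)"
    by (simp add: ee_add ee_half)
  finally have phase: "ee (theta_raw_phase n \<eta> (\<alpha> + int n) w) * - ee (- (of_nat n * ?x))
      = ee (theta_raw_phase n \<eta> \<alpha> w)"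
    by simp
  show ?thesis
    unfolding theta_raw_eq shift theta_prod_plus_eta[OF assms] by (simp only: mult.assoc[symmetric] phase)
qed

lemma theta_raw_minus:
  assumes "n > 0"
  shows "theta_raw n \<eta> \<alpha> w = - ee (of_int \<alpha> / of_nat n + of_nat n * w) * theta_raw n \<eta> (- \<alpha>) (- w)"
proof -
  let ?x = "w + of_int \<alpha> / of_nat n * \<eta>"
  have reflect: "- w + of_int (- \<alpha>) / of_nat n * \<eta> = - ?x"
    by (simp add: field_simps)
  have "of_int \<alpha> / of_nat n + of_nat n * w + theta_raw_phase n \<eta> (- \<alpha>) (- w) + - (of_nat n * ?x)
      = theta_raw_phase n \<eta> \<alpha> w"
    using assms unfolding theta_raw_phase_def by (simp add: field_simps)
  then have phase: "ee (of_int \<alpha> / of_nat n + of_nat n * w) * ee (theta_raw_phase n \<eta> (- \<alpha>) (- w))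
      * ee (- (of_nat n * ?x)) = ee (theta_raw_phase n \<eta> \<alpha> w)"
    by (simp only: ee_add[symmetric])
  have "- ee (of_int \<alpha> / of_nat n + of_nat n * w) * theta_raw n \<eta> (- \<alpha>) (- w)
      = ee (of_int \<alpha> / of_nat n + of_nat n * w) * ee (theta_raw_phase n \<eta> (- \<alpha>) (- w))
        * ee (- (of_nat n * ?x)) * theta_prod n \<eta> ?x"
    unfolding theta_raw_eq[of n \<eta> "- \<alpha>"] reflect theta_prod_minus[OF assms] by (simp add: mult_ac)
  then show ?thesis
    unfolding phase by (simp add: theta_raw_eq)
qed

lemma theta_raw_add_mult_n:
  assumes "n > 0"
  shows "theta_raw n \<eta> (\<alpha> + int n * q) w = theta_raw n \<eta> \<alpha> w"
proof (induction q rule: int_induct[where k = 0])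
  case (step1 q)
  then show ?case
    using theta_raw_add_n[OF assms, of \<eta> "\<alpha> + int n * q" w] by (simp add: algebra_simps)
next
  case (step2 q)
  then show ?case
    using theta_raw_add_n[OF assms, of \<eta> "\<alpha> + int n * (q - 1)" w] by (simp add: algebra_simps)
qed simp

lemma theta_idx_eq_theta_raw:
  assumes "n > 0"
  shows "theta_idx n \<eta> \<alpha> w = theta_raw n \<eta> \<alpha> w"
  using theta_raw_add_mult_n[OF assms, of \<eta> "\<alpha> mod int n" "\<alpha> div int n" w]
  by (simp add: theta_idx_def)

lemma theta_idx_minus:
  assumes "n > 0"
  shows "theta_idx n \<eta> \<alpha> w = - ee (of_int \<alpha> / of_nat n + of_nat n * w) * theta_idx n \<eta> (- \<alpha>) (- w)"
  unfolding theta_idx_eq_theta_raw[OF assms] by (rule theta_raw_minus[OF assms])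

lemma theta_idx_cong:
  "\<alpha> mod int n = \<beta> mod int n \<Longrightarrow> theta_idx n \<eta> \<alpha> w = theta_idx n \<eta> \<beta> w"
  unfolding theta_idx_def by simp

lemma minus_mod_minus_mod:
  "0 \<le> m \<Longrightarrow> m < int n \<Longrightarrow> (- ((- m) mod int n)) mod int n = m"
  by (metis minus_minus mod_minus_eq mod_pos_pos_trivial)

lemma minus_mod_eq_mod_iff:
  assumes "0 \<le> m" and "m < int n"
  shows "(- m) mod int n = \<beta> mod int n \<longleftrightarrow> m = (- \<beta>) mod int n"
proof
  assume "(- m) mod int n = \<beta> mod int n"
  then have "(- ((- m) mod int n)) mod int n = (- (\<beta> mod int n)) mod int n"
    by (rule arg_cong)
  then show "m = (- \<beta>) mod int n"
    by (simp only: mod_minus_eq minus_minus mod_pos_pos_trivial[OF assms])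
next
  assume "m = (- \<beta>) mod int n"
  then show "(- m) mod int n = \<beta> mod int n"
    by (simp only: mod_minus_eq minus_minus)
qed

lemma prod_theta_idx_uminus_index:
  assumes "n > 0"
  shows "(\<Prod>m\<in>{0..<int n} - {\<beta> mod int n}. theta_idx n \<eta> (- m) w)
       = (\<Prod>m\<in>{0..<int n} - {(- \<beta>) mod int n}. theta_idx n \<eta> m w)"
proof (rule prod.reindex_bij_witness[where i = "\<lambda>m. (- m) mod int n" and j = "\<lambda>m. (- m) mod int n"])
  fix m assume "m \<in> {0..<int n} - {(- \<beta>) mod int n}"
  then show "(- ((- m) mod int n)) mod int n = m" and "(- m) mod int n \<in> {0..<int n} - {\<beta> mod int n}"
    using assms by (auto simp: minus_mod_minus_mod minus_mod_eq_mod_iff)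
next
  fix m assume "m \<in> {0..<int n} - {\<beta> mod int n}"
  then show "(- ((- m) mod int n)) mod int n = m" and "(- m) mod int n \<in> {0..<int n} - {(- \<beta>) mod int n}"
    using assms by (auto simp: minus_mod_minus_mod minus_mod_eq_mod_iff)
  show "theta_idx n \<eta> ((- m) mod int n) w = theta_idx n \<eta> (- m) w"
    by (rule theta_idx_cong) simp
qed

lemma prod_minus_ee_remove:
  assumes "n > 0"
  shows "(\<Prod>m\<in>{0..<int n} - {\<beta> mod int n}. - ee (of_int m / of_nat n + of_nat n * (- w)))
       = ee (- (of_nat n ^ 2 * w) + of_nat n * w - of_int \<beta> / of_nat n)"
proof -
  define g where "g m = - ee (of_int m / of_nat n + of_nat n * (- w))" for m :: int
  have "(\<Prod>m\<in>{0..<int n}. g m) = (\<Prod>m\<in>int ` {..<n}. g m)"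
    by (simp add: lessThan_atLeast0 image_int_atLeastLessThan)
  also have "\<dots> = (\<Prod>m<n. - ee (of_nat n * (- w) + of_nat m / of_nat n))"
    unfolding g_def by (simp add: prod.reindex add.commute)
  also have "\<dots> = - ee (- (of_nat n ^ 2 * w))"
    unfolding prod_minus_ee_frac[OF assms] by (simp add: power2_eq_square mult.assoc)
  finally have "g (\<beta> mod int n) * (\<Prod>m\<in>{0..<int n} - {\<beta> mod int n}. g m) = - ee (- (of_nat n ^ 2 * w))"
    using assms by (subst (asm) prod.remove[of _ "\<beta> mod int n"]) auto
  moreover have "g (\<beta> mod int n) = - ee (of_int \<beta> / of_nat n + of_nat n * (- w))"
    unfolding g_def ee_add ee_mod_frac[OF assms] ..
  ultimately have "(\<Prod>m\<in>{0..<int n} - {\<beta> mod int n}. g m)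
      = ee (- (of_nat n ^ 2 * w)) * inverse (ee (of_int \<beta> / of_nat n + of_nat n * (- w)))"
    by (simp add: field_simps)
  also have "\<dots> = ee (- (of_nat n ^ 2 * w) + of_nat n * w - of_int \<beta> / of_nat n)"
    unfolding ee_minus[symmetric] ee_add[symmetric] by (simp add: algebra_simps)
  finally show ?thesis
    unfolding g_def .
qed

lemma prod_theta_idx_uminus_remove:
  assumes "n > 0"
  shows "(\<Prod>m\<in>{0..<int n} - {\<beta> mod int n}. theta_idx n \<eta> m (- w))
       = ee (- (of_nat n ^ 2 * w) + of_nat n * w - of_int \<beta> / of_nat n)
         * (\<Prod>m\<in>{0..<int n} - {(- \<beta>) mod int n}. theta_idx n \<eta> m w)"
proof -
  have factor: "theta_idx n \<eta> m (- w)
      = - ee (of_int m / of_nat n + of_nat n * (- w)) * theta_idx n \<eta> (- m) w" for m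
    using theta_idx_minus[OF assms, of \<eta> m "- w"] by simp
  show ?thesis
    unfolding factor prod.distrib prod_minus_ee_remove[OF assms] prod_theta_idx_uminus_index[OF assms] ..
qed

definition R_coeff :: "nat \<Rightarrow> complex \<Rightarrow> nat \<Rightarrow> complex \<Rightarrow> complex \<Rightarrow> int \<Rightarrow> int \<Rightarrow> int \<Rightarrow> complex" where
  "R_coeff n \<eta> k' \<tau> z i j r =
     (\<Prod>m\<in>{0..<int n} - {(j - i - r) mod int n}. theta_idx n \<eta> m (- z))
       / (\<Prod>m\<in>{1..<int n}. theta_idx n \<eta> m 0)
       * theta_idx n \<eta> (j - i + r * (int k' - 1)) (- z + \<tau>)
       / theta_idx n \<eta> (int k' * r) \<tau>"

lemma R_basis_eq:
  "R_basis n \<eta> k' \<tau> z i j q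
     = (\<Sum>r\<in>{0..<int n}. R_coeff n \<eta> k' \<tau> z i j r * basis2 n (j - r) (i + r) q)"
  unfolding R_basis_def R_coeff_def ..

lemma R_coeff_reflect:
  assumes "n > 0"
  shows "R_coeff n \<eta> k' \<tau> z i j r = ee (- (of_nat n ^ 2) * z) *
     ((\<Prod>m\<in>{0..<int n} - {(i - j + r) mod int n}. theta_idx n \<eta> m z)
        / (\<Prod>m\<in>{1..<int n}. theta_idx n \<eta> m 0)
        * theta_idx n \<eta> (i - j + r - int k' * r) (z - \<tau>)
        / theta_idx n \<eta> (- (int k' * r)) (- \<tau>))"
proof -
  define \<beta> where "\<beta> = j - i - r"
  define s where "s = j - i + r * (int k' - 1)"
  have "- \<beta> = i - j + r" and "- s = i - j + r - int k' * r"
    by (simp_all add: \<beta>_def s_def algebra_simps)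
  moreover have "ee (- (of_nat n ^ 2 * z) + of_nat n * z - of_int \<beta> / of_nat n)
      * ee (of_int s / of_nat n + of_nat n * (- z + \<tau>))
      * inverse (ee (of_int (int k' * r) / of_nat n + of_nat n * \<tau>)) = ee (- (of_nat n ^ 2) * z)"
    unfolding ee_minus[symmetric] ee_add[symmetric] using assms
    by (intro arg_cong[where f = ee]) (simp add: \<beta>_def s_def field_simps)
  ultimately show ?thesis
    unfolding R_coeff_def \<beta>_def[symmetric] s_def[symmetric] prod_theta_idx_uminus_remove[OF assms]
      theta_idx_minus[OF assms, of \<eta> s] theta_idx_minus[OF assms, of \<eta> "int k' * r"]
    by (simp add: divide_inverse mult_ac)
qed

lemma R_coeff_transpose:
  assumes "n > 0" and "k < n"
    and "a mod int n = (j - r) mod int n" and "b mod int n = (i + r) mod int n"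
  shows "ee (- (of_nat n ^ 2) * z) * R_coeff n \<eta> (n - k) (- \<tau>) (- z) a b r = R_coeff n \<eta> k \<tau> z i j r"
proof -
  obtain p q where a: "a = j - r + int n * p" and b: "b = i + r + int n * q"
    using assms(3,4) unfolding mod_eq_dvd_iff by (metis dvdE diff_add_cancel add.commute)
  have "(b - a - r) mod int n = (i - j + r) mod int n"
    unfolding mod_eq_dvd_iff by (rule dvdI[of _ _ "q - p"]) (simp add: a b algebra_simps)
  moreover have "theta_idx n \<eta> (b - a + r * (int (n - k) - 1)) w = theta_idx n \<eta> (i - j + r - int k * r) w" for w
  proof (rule theta_idx_cong)
    show "(b - a + r * (int (n - k) - 1)) mod int n = (i - j + r - int k * r) mod int n"
      unfolding mod_eq_dvd_iff using assms(2) by (intro dvdI[of _ _ "q - p + r"]) (simp add: a b algebra_simps)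
  qed
  moreover have "theta_idx n \<eta> (int (n - k) * r) w = theta_idx n \<eta> (- (int k * r)) w" for w
  proof (rule theta_idx_cong)
    show "(int (n - k) * r) mod int n = (- (int k * r)) mod int n"
      unfolding mod_eq_dvd_iff using assms(2) by (intro dvdI[of _ _ r]) (simp add: algebra_simps)
  qed
  ultimately show ?thesis
    unfolding R_coeff_reflect[OF assms(1), of \<eta> k \<tau> z i j r] by (simp add: R_coeff_def)
qed

lemma basis2_transpose:
  assumes "(i, j) \<in> idx2 n" and "(a, b) \<in> idx2 n"
  shows "basis2 n (b - r) (a + r) (i, j) = basis2 n (j - r) (i + r) (a, b)"
proof -
  have "x = y mod int n \<longleftrightarrow> int n dvd x - y" if "0 \<le> x" "x < int n" for x y
    using that by (metis mod_eq_dvd_iff mod_pos_pos_trivial)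
  moreover have "int n dvd i - (b - r) \<longleftrightarrow> int n dvd b - (i + r)"
    and "int n dvd j - (a + r) \<longleftrightarrow> int n dvd a - (j - r)"
    by (metis dvd_minus_iff minus_diff_eq diff_diff_eq2)+
  ultimately show ?thesis
    using assms unfolding basis2_def idx2_def by auto
qed

lemma R_basis_transpose:
  assumes "n > 0" and "k < n" and "(i, j) \<in> idx2 n" and "(a, b) \<in> idx2 n"
  shows "ee (- (of_nat n ^ 2) * z) * R_basis n \<eta> (n - k) (- \<tau>) (- z) a b (i, j)
       = R_basis n \<eta> k \<tau> z i j (a, b)"
  unfolding R_basis_eq sum_distrib_left
proof (rule sum.cong[OF refl])
  fix r
  show "ee (- (of_nat n ^ 2) * z) * (R_coeff n \<eta> (n - k) (- \<tau>) (- z) a b r * basis2 n (b - r) (a + r) (i, j))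
      = R_coeff n \<eta> k \<tau> z i j r * basis2 n (j - r) (i + r) (a, b)"
  proof (cases "(a, b) = ((j - r) mod int n, (i + r) mod int n)")
    case True
    then have "a mod int n = (j - r) mod int n" and "b mod int n = (i + r) mod int n"
      by simp_all
    moreover have "basis2 n (j - r) (i + r) (a, b) = 1"
      using True by (simp add: basis2_def)
    ultimately show ?thesis
      unfolding basis2_transpose[OF assms(3,4)] using R_coeff_transpose[OF assms(1,2)] by simp
  next
    case False
    then have "basis2 n (j - r) (i + r) (a, b) = 0"
      by (simp add: basis2_def)
    then show ?thesis
      unfolding basis2_transpose[OF assms(3,4)] by simp
  qed
qed

lemma is_adjoint_lin_ext:
  assumes "\<And>p q. p \<in> idx2 n \<Longrightarrow> q \<in> idx2 n \<Longrightarrow> f (fst p) (snd p) q = g (fst q) (snd q) p"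
  shows "is_adjoint n (lin_ext n f) (lin_ext n g)"
  unfolding is_adjoint_def
proof (intro allI)
  fix x y :: vec2
  have "bform n (lin_ext n f x) y = (\<Sum>q\<in>idx2 n. \<Sum>p\<in>idx2 n. x p * y q * g (fst q) (snd q) p)"
    unfolding bform_def lin_ext_def sum_distrib_right
    by (intro sum.cong refl) (simp add: assms mult_ac)
  also have "\<dots> = bform n x (lin_ext n g y)"
    unfolding bform_def lin_ext_def sum_distrib_left
    by (subst sum.swap) (intro sum.cong refl, simp add: mult_ac)
  finally show "bform n (lin_ext n f x) y = bform n x (lin_ext n g y)" .
qed

theorem lemma7p3:
  fixes n k :: nat and \<eta> \<tau> z :: complex
  assumes "1 \<le> k" and "k < n" and "coprime n k"
    and "Im \<eta> > 0"
    and "\<not> (\<exists>a b :: int. \<tau> = (of_int a + of_int b * \<eta>) / of_nat n)"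
  shows "is_adjoint n
           (\<lambda>v. (\<lambda>q. ee (- (of_nat n ^ 2) * z) * R_op n \<eta> (n - k) (- \<tau>) (- z) v q))
           (R_op n \<eta> k \<tau> z)"
proof -
  have "n > 0"
    using assms(2) by simp
  have scaled: "(\<lambda>v q. ee (- (of_nat n ^ 2) * z) * lin_ext n (R_basis n \<eta> (n - k) (- \<tau>) (- z)) v q)
      = lin_ext n (\<lambda>a b q. ee (- (of_nat n ^ 2) * z) * R_basis n \<eta> (n - k) (- \<tau>) (- z) a b q)"
    unfolding lin_ext_def by (simp add: sum_distrib_left mult_ac)
  show ?thesis
    unfolding R_op_def scaled
  proof (rule is_adjoint_lin_ext)
    fix p q
    assume "p \<in> idx2 n" and "q \<in> idx2 n"
    then show "ee (- (of_nat n ^ 2) * z) * R_basis n \<eta> (n - k) (- \<tau>) (- z) (fst p) (snd p) q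
        = R_basis n \<eta> k \<tau> z (fst q) (snd q) p"
      using R_basis_transpose[OF \<open>n > 0\<close> assms(2), of "fst q" "snd q" "fst p" "snd p"] by simp
  qed
qed

end
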